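(* Let $L$ be a linear forest with $k$ vertices. If $q\ge k+1$ and $r\ge k-1$ are integers, then $s(P_{q+r},L)=s(C_q+P_r,L)$.
   Context: A linear forest is a disjoint union of paths. $P_j$ and $C_j$ are the path and cycle with $j$ vertices, $P_0$ is the graph with no vertices, and $+$ denotes disjoint union. For graphs $G,H$, $s(G,H)$ is the number of vertex subsets $X\subseteq V(G)$ such that $G[X]$ is isomorphic to $H$. *)

theory Defs
  imports Main
begin

text \<open>A (simple) graph is a pair (V, E): a vertex set and a set of edges, each
  edge being a 2-element subset of V. Isomorphism and induced subgraphs only
  look at pairs of vertices.\<close>

type_synonym 'a graph = "'a set \<times> 'a set set"

definition verts :: "'a graph \<Rightarrow> 'a set" where "verts G = fst G"
definition edges :: "'a graph \<Rightarrow> 'a set set" where "edges G = snd G"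

definition induced :: "'a graph \<Rightarrow> 'a set \<Rightarrow> 'a graph" where
  "induced G X = (X, {e \<in> edges G. e \<subseteq> X})"

definition graph_iso :: "'a graph \<Rightarrow> 'b graph \<Rightarrow> bool" where
  "graph_iso G H \<longleftrightarrow> (\<exists>f. bij_betw f (verts G) (verts H) \<and>
     (\<forall>u\<in>verts G. \<forall>v\<in>verts G. {u, v} \<in> edges G \<longleftrightarrow> {f u, f v} \<in> edges H))"

definition s_count :: "'a graph \<Rightarrow> 'b graph \<Rightarrow> nat" where
  "s_count G H = card {X. X \<subseteq> verts G \<and> graph_iso (induced G X) H}"

definition path_graph :: "nat \<Rightarrow> nat graph" where
  "path_graph j = ({0..<j}, {{i, Suc i} | i. Suc i < j})"

definition cycle_graph :: "nat \<Rightarrow> nat graph" where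
  "cycle_graph j = ({0..<j}, {{i, (Suc i) mod j} | i. i < j \<and> i \<noteq> (Suc i) mod j})"

definition disj_union :: "'a graph \<Rightarrow> 'b graph \<Rightarrow> ('a + 'b) graph" where
  "disj_union G H = (Inl ` verts G \<union> Inr ` verts H,
                     (\<lambda>e. Inl ` e) ` edges G \<union> (\<lambda>e. Inr ` e) ` edges H)"

definition paths_union :: "nat list \<Rightarrow> (nat \<times> nat) graph" where
  "paths_union ns = ({(i, j). i < length ns \<and> j < ns ! i},
                     {{(i, j), (i, Suc j)} | i j. i < length ns \<and> Suc j < ns ! i})"

definition linear_forest :: "'a graph \<Rightarrow> bool" where
  "linear_forest L \<longleftrightarrow> (\<exists>ns. graph_iso L (paths_union ns))"

end

theory Submission
  imports Defs
begin

(* For 0 <= p < q, wrap the window {p, ..., p+q-1} of P_(q+r) around C_q (vertex i goes to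
   i mod q) and glue the two remaining pieces into P_r. On a vertex set X this preserves induced
   adjacency unless X contains one of four pairs: the two path edges cut by the window, or the two
   non-edges that become adjacent. Each of these pairs contains p or p+q, so if |X| = k with k < q
   and k <= r+1, a pigeonhole argument yields an admissible p <= min(q-1, r). Wrapping with the
   least admissible p is a bijection between the k-subsets of P_(q+r) and of C_q + P_r preserving
   induced subgraphs: the least admissible p can be read off from the image, because admissibility
   of every p' <= p is unchanged by wrapping at p. Hence s(P_(q+r), H) = s(C_q + P_r, H) for every
   graph H on k vertices. *)

lemma verts_induced [simp]: "verts (induced G X) = X"
  by (simp add: induced_def verts_def)

lemma edges_induced [simp]: "edges (induced G X) = {e \<in> edges G. e \<subseteq> X}"
  by (simp add: induced_def edges_def)

lemma graph_iso_card_verts: "graph_iso G H \<Longrightarrow> card (verts G) = card (verts H)"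
  unfolding graph_iso_def using bij_betw_same_card by blast

lemma graph_iso_sym: "graph_iso G H \<Longrightarrow> graph_iso H G"
  unfolding graph_iso_def
proof (elim exE conjE)
  fix f assume f: "bij_betw f (verts G) (verts H)"
    and e: "\<forall>u\<in>verts G. \<forall>v\<in>verts G. {u, v} \<in> edges G \<longleftrightarrow> {f u, f v} \<in> edges H"
  let ?g = "the_inv_into (verts G) f"
  have g: "bij_betw ?g (verts H) (verts G)"
    using f by (rule bij_betw_the_inv_into)
  have "{u, v} \<in> edges H \<longleftrightarrow> {?g u, ?g v} \<in> edges G" if "u \<in> verts H" "v \<in> verts H" for u v
    using e that bij_betwE[OF g] f_the_inv_into_f_bij_betw[OF f] by metis
  with g show "\<exists>g. bij_betw g (verts H) (verts G) \<and>
      (\<forall>u\<in>verts H. \<forall>v\<in>verts H. {u, v} \<in> edges H \<longleftrightarrow> {g u, g v} \<in> edges G)"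
    by blast
qed

lemma graph_iso_trans: "graph_iso G H \<Longrightarrow> graph_iso H K \<Longrightarrow> graph_iso G K"
  unfolding graph_iso_def
proof (elim exE conjE)
  fix f g assume f: "bij_betw f (verts G) (verts H)"
    and ef: "\<forall>u\<in>verts G. \<forall>v\<in>verts G. {u, v} \<in> edges G \<longleftrightarrow> {f u, f v} \<in> edges H"
    and g: "bij_betw g (verts H) (verts K)"
    and eg: "\<forall>u\<in>verts H. \<forall>v\<in>verts H. {u, v} \<in> edges H \<longleftrightarrow> {g u, g v} \<in> edges K"
  have "{u, v} \<in> edges G \<longleftrightarrow> {g (f u), g (f v)} \<in> edges K" if "u \<in> verts G" "v \<in> verts G" for u v
    using ef eg that bij_betwE[OF f] by metis
  with bij_betw_trans[OF f g] show "\<exists>h. bij_betw h (verts G) (verts K) \<and>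
      (\<forall>u\<in>verts G. \<forall>v\<in>verts G. {u, v} \<in> edges G \<longleftrightarrow> {h u, h v} \<in> edges K)"
    by (metis comp_apply)
qed

lemma verts_path_graph: "verts (path_graph n) = {0..<n}"
  by (simp add: path_graph_def verts_def)

lemma path_graph_edge_iff:
  "{u, v} \<in> edges (path_graph n) \<longleftrightarrow> (Suc u = v \<or> Suc v = u) \<and> u < n \<and> v < n"
  unfolding edges_def path_graph_def by (auto simp: doubleton_eq_iff)

lemma cycle_graph_edge_iff:
  "{a, b} \<in> edges (cycle_graph q) \<longleftrightarrow>
     a < q \<and> b < q \<and> a \<noteq> b \<and> (b = Suc a mod q \<or> a = Suc b mod q)"
  unfolding edges_def cycle_graph_def by (auto simp: doubleton_eq_iff)

lemma verts_cycle_graph: "verts (cycle_graph n) = {0..<n}"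
  by (simp add: cycle_graph_def verts_def)

lemma verts_disj_union: "verts (disj_union G H) = Inl ` verts G \<union> Inr ` verts H"
  by (simp add: disj_union_def verts_def)

lemma edges_disj_union:
  "edges (disj_union G H) = (\<lambda>e. Inl ` e) ` edges G \<union> (\<lambda>e. Inr ` e) ` edges H"
  by (simp add: disj_union_def edges_def)

lemma disj_union_Inl_edge_iff: "{Inl a, Inl b} \<in> edges (disj_union G H) \<longleftrightarrow> {a, b} \<in> edges G"
proof -
  have "{Inl a, Inl b} = Inl ` e \<longleftrightarrow> e = {a, b}" for e :: "'a set"
    by (metis image_empty image_insert inj_Inl inj_image_eq_iff)
  moreover have "{Inl a, Inl b} \<noteq> Inr ` e" for e :: "'b set"
    by auto
  ultimately show ?thesis
    unfolding edges_disj_union by (metis (no_types, lifting) UnE UnI1 imageE image_eqI)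
qed

lemma disj_union_Inr_edge_iff: "{Inr a, Inr b} \<in> edges (disj_union G H) \<longleftrightarrow> {a, b} \<in> edges H"
proof -
  have "{Inr a, Inr b} = Inr ` e \<longleftrightarrow> e = {a, b}" for e :: "'b set"
    by (metis image_empty image_insert inj_Inr inj_image_eq_iff)
  moreover have "{Inr a, Inr b} \<noteq> Inl ` e" for e :: "'a set"
    by auto
  ultimately show ?thesis
    unfolding edges_disj_union by (metis (no_types, lifting) UnE UnI2 imageE image_eqI)
qed

lemma disj_union_Inl_Inr_not_edge: "{Inl a, Inr b} \<notin> edges (disj_union G H)"
  unfolding edges_disj_union by auto

lemma s_count_eq_if_bij_betw_iso:
  assumes bij: "bij_betw \<Phi> {X. X \<subseteq> verts G \<and> card X = card (verts H)}
                           {Y. Y \<subseteq> verts G' \<and> card Y = card (verts H)}"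
    and iso: "\<And>X. X \<subseteq> verts G \<Longrightarrow> card X = card (verts H) \<Longrightarrow>
                graph_iso (induced G X) (induced G' (\<Phi> X))"
  shows "s_count G H = s_count G' H"
proof -
  let ?A = "{X. X \<subseteq> verts G \<and> card X = card (verts H)}"
  let ?B = "{Y. Y \<subseteq> verts G' \<and> card Y = card (verts H)}"
  have S: "{X. X \<subseteq> verts G \<and> graph_iso (induced G X) H} = {X \<in> ?A. graph_iso (induced G X) H}"
    using graph_iso_card_verts by fastforce
  have S': "{Y. Y \<subseteq> verts G' \<and> graph_iso (induced G' Y) H} = {Y \<in> ?B. graph_iso (induced G' Y) H}"
    using graph_iso_card_verts by fastforce
  have iff: "graph_iso (induced G X) H \<longleftrightarrow> graph_iso (induced G' (\<Phi> X)) H" if "X \<in> ?A" for X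
  proof -
    have "graph_iso (induced G X) (induced G' (\<Phi> X))"
      using iso that by blast
    then show ?thesis
      by (meson graph_iso_sym graph_iso_trans)
  qed
  have "bij_betw \<Phi> {X \<in> ?A. graph_iso (induced G X) H} {Y \<in> ?B. graph_iso (induced G' Y) H}"
    unfolding bij_betw_def
  proof
    show "inj_on \<Phi> {X \<in> ?A. graph_iso (induced G X) H}"
      using bij by (auto simp: bij_betw_def intro: inj_on_subset)
    show "\<Phi> ` {X \<in> ?A. graph_iso (induced G X) H} = {Y \<in> ?B. graph_iso (induced G' Y) H}"
    proof (intro equalityI subsetI)
      fix Y assume "Y \<in> {Y \<in> ?B. graph_iso (induced G' Y) H}"
      moreover from this have "Y \<in> \<Phi> ` ?A"
        using bij by (simp add: bij_betw_def)
      then obtain X where "X \<in> ?A" "Y = \<Phi> X"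
        by blast
      ultimately show "Y \<in> \<Phi> ` {X \<in> ?A. graph_iso (induced G X) H}"
        using iff by blast
    qed (use bij iff in \<open>auto simp: bij_betw_def\<close>)
  qed
  then show ?thesis
    unfolding s_count_def S S' by (rule bij_betw_same_card)
qed

definition wrap_window :: "nat \<Rightarrow> nat \<Rightarrow> nat \<Rightarrow> nat + nat" where
  "wrap_window q p i =
     (if i < p then Inr i else if i < p + q then Inl (i mod q) else Inr (i - q))"

definition unwrap_window :: "nat \<Rightarrow> nat \<Rightarrow> nat + nat \<Rightarrow> nat" where
  "unwrap_window q p y =
     (case y of Inl a \<Rightarrow> if a < p then a + q else a | Inr b \<Rightarrow> if b < p then b else b + q)"

lemma unwrap_wrap_window:
  assumes "p < q"
  shows "unwrap_window q p (wrap_window q p i) = i"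
proof (cases "p \<le> i \<and> i < p + q")
  case True
  then have "i mod q = (if i < q then i else i - q)"
    using assms by (auto simp: le_mod_geq)
  then show ?thesis
    using True by (auto simp: wrap_window_def unwrap_window_def)
qed (auto simp: wrap_window_def unwrap_window_def)

lemma wrap_unwrap_window:
  "p < q \<Longrightarrow> y \<in> Inl ` {0..<q} \<union> Inr ` UNIV \<Longrightarrow> wrap_window q p (unwrap_window q p y) = y"
  by (auto simp: wrap_window_def unwrap_window_def split: if_splits)

lemma inj_wrap_window: "p < q \<Longrightarrow> inj (wrap_window q p)"
  by (metis injI unwrap_wrap_window)

lemma bij_betw_wrap_window:
  assumes "p < q" "p \<le> r"
  shows "bij_betw (wrap_window q p) {0..<q + r} (Inl ` {0..<q} \<union> Inr ` {0..<r})"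
proof (rule bij_betw_byWitness[where f' = "unwrap_window q p"])
  show "wrap_window q p ` {0..<q + r} \<subseteq> Inl ` {0..<q} \<union> Inr ` {0..<r}"
    using assms by (auto simp: wrap_window_def)
  show "unwrap_window q p ` (Inl ` {0..<q} \<union> Inr ` {0..<r}) \<subseteq> {0..<q + r}"
    using assms by (auto simp: unwrap_window_def)
qed (use assms unwrap_wrap_window wrap_unwrap_window in auto)

definition avoids :: "'a set set \<Rightarrow> 'a set \<Rightarrow> bool" where
  "avoids C X \<longleftrightarrow> (\<forall>e\<in>C. \<not> e \<subseteq> X)"

lemma avoids_image_iff: "inj f \<Longrightarrow> avoids ((`) f ` C) (f ` X) \<longleftrightarrow> avoids C X"
  by (simp add: avoids_def inj_image_subset_iff)

(* The pairs whose adjacency wrap_window q p changes: the path edges {p-1, p} and {p+q-1, p+q}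
   are cut, while {p, p+q-1} becomes a cycle edge and {p-1, p+q} a path edge. *)
definition cut_pairs :: "nat \<Rightarrow> nat \<Rightarrow> nat set set" where
  "cut_pairs q p = {{p + q - 1, p + q}, {p, p + q - 1}} \<union>
     (if p = 0 then {} else {{p - 1, p}, {p - 1, p + q}})"

(* The image of cut_pairs q p under wrap_window q p' for every p' >= p, so that admissibility
   of p can also be tested on the cycle side. *)
definition cycle_cut_pairs :: "nat \<Rightarrow> nat \<Rightarrow> (nat + nat) set set" where
  "cycle_cut_pairs q p =
     {{Inl ((p + q - 1) mod q), Inr p}, {Inl (p mod q), Inl ((p + q - 1) mod q)}} \<union>
     (if p = 0 then {} else {{Inr (p - 1), Inl (p mod q)}, {Inr (p - 1), Inr p}})"

lemma wrap_window_cut_pairs: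
  assumes "p' \<le> p" "p < q"
  shows "(`) (wrap_window q p) ` cut_pairs q p' = cycle_cut_pairs q p'"
  using assms
  by (cases "p' < p") (auto simp: cut_pairs_def cycle_cut_pairs_def wrap_window_def insert_commute)

lemma inj_on_mod_window: "inj_on (\<lambda>i. i mod q) {p..<p + q :: nat}"
proof -
  have "x = y" if "y \<le> x" "x \<in> {p..<p + q}" "y \<in> {p..<p + q}" "x mod q = y mod q" for x y :: nat
  proof -
    have "q dvd x - y"
      using that by (simp add: mod_eq_dvd_iff_nat)
    moreover have "x - y < q"
      using that by auto
    ultimately show "x = y"
      using that(1) nat_dvd_not_less by fastforce
  qed
  then show ?thesis
    by (metis (no_types, lifting) inj_onI nat_le_linear)
qed

lemma window_mod_edge_iff:
  assumes "p \<le> u" "u \<le> v" "v < p + q" "\<not> (u = p \<and> v = p + q - 1)"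
  shows "Suc u = v \<longleftrightarrow> {u mod q, v mod q} \<in> edges (cycle_graph q)"
proof -
  have eq: "x = y" if "x mod q = y mod q" "p \<le> x" "x < p + q" "p \<le> y" "y < p + q" for x y
    using inj_on_mod_window[of q p] that by (auto dest: inj_onD)
  have "0 < q"
    using assms by linarith
  then have range: "u mod q < q" "v mod q < q"
    by simp_all
  have distinct: "u mod q \<noteq> v mod q \<longleftrightarrow> u \<noteq> v"
    using eq[of u v] assms by auto
  have forward: "v mod q = Suc (u mod q) mod q \<longleftrightarrow> Suc u = v"
  proof (cases "Suc u < p + q")
    case True
    then show ?thesis
      using eq[of v "Suc u"] assms by (auto simp: mod_Suc_eq)
  next
    case False
    then have uv: "u = p + q - 1" "v = p + q - 1"
      using assms by linarith+
    then have "q \<noteq> 1"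
      using assms(4) by auto
    have "a \<noteq> Suc a mod q" if "a < q" for a
    proof (cases "Suc a < q")
      case False
      then have "Suc a = q"
        using that by linarith
      then show ?thesis
        using \<open>q \<noteq> 1\<close> by auto
    qed simp
    then show ?thesis
      using uv range by auto
  qed
  have backward: "u mod q \<noteq> Suc (v mod q) mod q"
  proof (cases "Suc v < p + q")
    case True
    then show ?thesis
      using eq[of u "Suc v"] assms by (auto simp: mod_Suc_eq)
  next
    case False
    then have "Suc v = p + q"
      using assms by linarith
    then have "Suc v mod q = p mod q"
      by simp
    then show ?thesis
      using eq[of u p] assms False by (auto simp: mod_Suc_eq)
  qed
  show ?thesis
    unfolding cycle_graph_edge_iff using range distinct forward backward by auto
qed

lemma wrap_window_edge_iff:
  assumes "p < q" "p \<le> r" "u < q + r" "v < q + r" "{u, v} \<notin> cut_pairs q p"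
  shows "{u, v} \<in> edges (path_graph (q + r)) \<longleftrightarrow>
         {wrap_window q p u, wrap_window q p v} \<in> edges (disj_union (cycle_graph q) (path_graph r))"
proof -
  have ordered: "{u, v} \<in> edges (path_graph (q + r)) \<longleftrightarrow>
         {wrap_window q p u, wrap_window q p v} \<in> edges (disj_union (cycle_graph q) (path_graph r))"
    if "u \<le> v" "v < q + r" "{u, v} \<notin> cut_pairs q p" for u v
  proof -
    have cut: "\<not> (0 < p \<and> u = p - 1 \<and> (v = p \<or> v = p + q))"
      "\<not> (u = p + q - 1 \<and> v = p + q)" "\<not> (u = p \<and> v = p + q - 1)"
      using that(3) by (auto simp: cut_pairs_def)
    consider "v < p" | "u < p" "p \<le> v" "v < p + q" | "u < p" "p + q \<le> v"
      | "p \<le> u" "v < p + q" | "p \<le> u" "u < p + q" "p + q \<le> v" | "p + q \<le> u"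
      using \<open>u \<le> v\<close> by linarith
    then show ?thesis
    proof cases
      case 4
      then show ?thesis
        using window_mod_edge_iff[of p u v q] that cut assms(1,2)
        by (auto simp: wrap_window_def disj_union_Inl_edge_iff path_graph_edge_iff)
    qed (use that cut assms(1,2) in \<open>auto simp: wrap_window_def disj_union_Inr_edge_iff
          disj_union_Inl_Inr_not_edge insert_commute[of "Inr _" "Inl _"] path_graph_edge_iff\<close>)
  qed
  show ?thesis
    using ordered[of u v] ordered[of v u] assms by (metis insert_commute nat_le_linear)
qed

lemma graph_iso_induced_wrap_window:
  assumes "p < q" "p \<le> r" "X \<subseteq> {0..<q + r}" "avoids (cut_pairs q p) X"
  shows "graph_iso (induced (path_graph (q + r)) X)
           (induced (disj_union (cycle_graph q) (path_graph r)) (wrap_window q p ` X))"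
  unfolding graph_iso_def
proof (intro exI conjI ballI)
  show "bij_betw (wrap_window q p) (verts (induced (path_graph (q + r)) X))
      (verts (induced (disj_union (cycle_graph q) (path_graph r)) (wrap_window q p ` X)))"
    using inj_on_subset[OF inj_wrap_window[OF assms(1)] subset_UNIV] by (simp add: bij_betw_def)
  fix u v assume "u \<in> verts (induced (path_graph (q + r)) X)" "v \<in> verts (induced (path_graph (q + r)) X)"
  then have "u \<in> X" "v \<in> X"
    by simp_all
  then have "{u, v} \<notin> cut_pairs q p" "u < q + r" "v < q + r"
    using assms(3,4) by (auto simp: avoids_def)
  with \<open>u \<in> X\<close> \<open>v \<in> X\<close> show "{u, v} \<in> edges (induced (path_graph (q + r)) X) \<longleftrightarrow>
      {wrap_window q p u, wrap_window q p v}
        \<in> edges (induced (disj_union (cycle_graph q) (path_graph r)) (wrap_window q p ` X))"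
    using wrap_window_edge_iff[OF assms(1,2)] by auto
qed

lemma avoids_cut_pairs_exists:
  assumes "finite X" "card X < q" "card X \<le> r + 1"
  shows "\<exists>p \<le> min (q - 1) r. avoids (cut_pairs q p) X"
proof (rule ccontr)
  assume none: "\<not> ?thesis"
  define M where "M = min (q - 1) r"
  have "avoids (cut_pairs q p) X" if "p \<notin> X" "p + q \<notin> X" for p
    using that by (auto simp: avoids_def cut_pairs_def)
  then have hit: "i \<in> X \<or> i + q \<in> X" if "i \<le> M" for i
    using none that unfolding M_def by blast
  have "avoids (cut_pairs q 0) X" if "q - 1 \<notin> X"
    using that by (auto simp: avoids_def cut_pairs_def)
  then have "q - 1 \<in> X"
    using none by auto
  define f where "f i = (if i \<in> X then i else i + q)" for i
  have "M < q"
    using assms(2) by (simp add: M_def)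
  then have "inj_on f {0..M}"
    by (auto simp: f_def inj_on_def split: if_splits)
  then have card_f: "card (f ` {0..M}) = M + 1"
    by (simp add: card_image)
  have f_X: "f ` {0..M} \<subseteq> X"
  proof (rule image_subsetI)
    fix i assume "i \<in> {0..M}"
    then show "f i \<in> X"
      using hit[of i] by (auto simp: f_def)
  qed
  show False
  proof (cases "q - 1 \<le> r")
    case True
    then have "q \<le> card X"
      using card_mono[OF assms(1) f_X] card_f \<open>M < q\<close> by (simp add: M_def)
    then show False
      using assms(2) by simp
  next
    case False
    then have "q - 1 \<notin> f ` {0..M}"
      by (auto simp: f_def M_def)
    then have "card (insert (q - 1) (f ` {0..M})) = r + 2"
      using card_f False by (simp add: M_def)
    moreover have "insert (q - 1) (f ` {0..M}) \<subseteq> X"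
      using f_X \<open>q - 1 \<in> X\<close> by simp
    ultimately have "r + 2 \<le> card X"
      using card_mono[OF assms(1)] by metis
    then show False
      using assms(3) by simp
  qed
qed

lemma Least_eq_if_agree_upto:
  fixes P Q :: "nat \<Rightarrow> bool"
  assumes "P n" "\<And>m. m \<le> n \<Longrightarrow> P m \<longleftrightarrow> Q m"
  shows "(LEAST m. P m) = (LEAST m. Q m)"
proof -
  have le: "(LEAST m. P m) \<le> n"
    using assms(1) by (rule Least_le)
  then have "Q (LEAST m. P m)"
    using assms(2) LeastI[of P n, OF assms(1)] by blast
  moreover have "(LEAST m. P m) \<le> m" if "Q m" for m
    using that le assms(2) Least_le[of P m] by (cases "m \<le> n") auto
  ultimately show ?thesis
    by (rule Least_equality[symmetric])
qed

definition least_cut :: "nat \<Rightarrow> nat set \<Rightarrow> nat" where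
  "least_cut q X = (LEAST p. avoids (cut_pairs q p) X)"

definition least_cycle_cut :: "nat \<Rightarrow> (nat + nat) set \<Rightarrow> nat" where
  "least_cycle_cut q Y = (LEAST p. avoids (cycle_cut_pairs q p) Y)"

lemma avoids_cycle_cut_pairs_wrap_window_iff:
  assumes "p' \<le> p" "p < q"
  shows "avoids (cycle_cut_pairs q p') (wrap_window q p ` X) \<longleftrightarrow> avoids (cut_pairs q p') X"
  using avoids_image_iff[OF inj_wrap_window[OF assms(2)]] wrap_window_cut_pairs[OF assms] by metis

lemma least_cycle_cut_wrap_window:
  assumes "p < q" "avoids (cut_pairs q p) X"
  shows "least_cycle_cut q (wrap_window q p ` X) = least_cut q X"
  unfolding least_cycle_cut_def least_cut_def
  by (rule Least_eq_if_agree_upto[where n = p])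
     (use assms avoids_cycle_cut_pairs_wrap_window_iff in auto)

lemma least_cut_bound:
  assumes "finite X" "card X < q" "card X \<le> r + 1"
  shows "least_cut q X < q" "least_cut q X \<le> r" "avoids (cut_pairs q (least_cut q X)) X"
proof -
  obtain p where p: "p \<le> min (q - 1) r" "avoids (cut_pairs q p) X"
    using avoids_cut_pairs_exists[OF assms] by blast
  have "least_cut q X \<le> p"
    unfolding least_cut_def using p(2) by (rule Least_le)
  then show "least_cut q X < q" "least_cut q X \<le> r"
    using p(1) assms(2) by auto
  show "avoids (cut_pairs q (least_cut q X)) X"
    unfolding least_cut_def using p(2) by (rule LeastI)
qed

lemma wrap_window_image:
  assumes "p < q" "p \<le> r" "X \<subseteq> {0..<q + r}"
  shows "wrap_window q p ` X \<subseteq> Inl ` {0..<q} \<union> Inr ` {0..<r}"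
    "card (wrap_window q p ` X) = card X"
proof -
  show "wrap_window q p ` X \<subseteq> Inl ` {0..<q} \<union> Inr ` {0..<r}"
    using bij_betw_imp_surj_on[OF bij_betw_wrap_window[OF assms(1,2)]] assms(3) by blast
  show "card (wrap_window q p ` X) = card X"
    using inj_on_subset[OF inj_wrap_window[OF assms(1)] subset_UNIV] by (rule card_image)
qed

lemma unwrap_window_image:
  assumes "p < q" "p \<le> r" "Y \<subseteq> Inl ` {0..<q} \<union> Inr ` {0..<r}"
  shows "unwrap_window q p ` Y \<subseteq> {0..<q + r}"
    "wrap_window q p ` unwrap_window q p ` Y = Y"
    "card (unwrap_window q p ` Y) = card Y"
proof -
  have inv: "wrap_window q p (unwrap_window q p y) = y" if "y \<in> Y" for y
    using wrap_unwrap_window[OF assms(1)] that assms(3) by blast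
  show "unwrap_window q p ` Y \<subseteq> {0..<q + r}"
    using assms by (auto simp: unwrap_window_def)
  show "wrap_window q p ` unwrap_window q p ` Y = Y"
    using inv by (force simp: image_iff)
  have "inj_on (unwrap_window q p) Y"
    using inv by (rule inj_on_inverseI)
  then show "card (unwrap_window q p ` Y) = card Y"
    by (rule card_image)
qed

lemma least_cut_unwrap_window:
  assumes "p < q" "p \<le> r" "Y \<subseteq> Inl ` {0..<q} \<union> Inr ` {0..<r}" "avoids (cycle_cut_pairs q p) Y"
  shows "least_cut q (unwrap_window q p ` Y) = least_cycle_cut q Y"
proof -
  let ?X = "unwrap_window q p ` Y"
  have "wrap_window q p ` ?X = Y"
    using unwrap_window_image[OF assms(1-3)] by simp
  moreover from this have "avoids (cut_pairs q p) ?X"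
    using avoids_cycle_cut_pairs_wrap_window_iff[of p p q ?X] assms(1,4) by simp
  ultimately show ?thesis
    using least_cycle_cut_wrap_window[OF assms(1)] by metis
qed

lemma least_cycle_cut_bound:
  assumes "Y \<subseteq> Inl ` {0..<q} \<union> Inr ` {0..<r}" "card Y < q" "card Y \<le> r + 1"
  shows "least_cycle_cut q Y < q" "least_cycle_cut q Y \<le> r"
    "avoids (cycle_cut_pairs q (least_cycle_cut q Y)) Y"
proof -
  define M where "M = min (q - 1) r"
  have M: "M < q" "M \<le> r"
    using assms(2) by (auto simp: M_def)
  define X where "X = unwrap_window q M ` Y"
  have X: "X \<subseteq> {0..<q + r}" "wrap_window q M ` X = Y" "card X = card Y"
    using unwrap_window_image[OF M assms(1)] by (simp_all add: X_def)
  then have "finite X"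
    using finite_subset by blast
  define p where "p = least_cut q X"
  have "p \<le> M" "avoids (cut_pairs q p) X"
    using least_cut_bound[OF \<open>finite X\<close>] X(3) assms(2,3) by (auto simp: p_def M_def)
  then have Y: "avoids (cycle_cut_pairs q p) Y"
    using avoids_cycle_cut_pairs_wrap_window_iff[OF \<open>p \<le> M\<close> M(1), of X] X(2) by simp
  have "least_cycle_cut q Y \<le> p"
    unfolding least_cycle_cut_def using Y by (rule Least_le)
  then show "least_cycle_cut q Y < q" "least_cycle_cut q Y \<le> r"
    using \<open>p \<le> M\<close> M by auto
  show "avoids (cycle_cut_pairs q (least_cycle_cut q Y)) Y"
    unfolding least_cycle_cut_def using Y by (rule LeastI)
qed

lemma bij_betw_wrap_least_cut:
  assumes "k < q" "k \<le> r + 1"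
  shows "bij_betw (\<lambda>X. wrap_window q (least_cut q X) ` X)
           {X. X \<subseteq> {0..<q + r} \<and> card X = k}
           {Y. Y \<subseteq> Inl ` {0..<q} \<union> Inr ` {0..<r} \<and> card Y = k}"
proof (rule bij_betw_byWitness[where f' = "\<lambda>Y. unwrap_window q (least_cycle_cut q Y) ` Y"])
  let ?A = "{X. X \<subseteq> {0..<q + r} \<and> card X = k}"
  let ?B = "{Y. Y \<subseteq> Inl ` {0..<q} \<union> Inr ` {0..<r} \<and> card Y = k}"
  have cut_X: "least_cut q X < q" "least_cut q X \<le> r" "avoids (cut_pairs q (least_cut q X)) X"
    if "X \<in> ?A" for X
    using least_cut_bound[of X q r] that assms finite_subset[of X "{0..<q + r}"] by auto
  have cut_Y: "least_cycle_cut q Y < q" "least_cycle_cut q Y \<le> r"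
    "avoids (cycle_cut_pairs q (least_cycle_cut q Y)) Y" if "Y \<in> ?B" for Y
    using least_cycle_cut_bound[of Y q r] that assms by auto
  show "\<forall>X\<in>?A. unwrap_window q (least_cycle_cut q (wrap_window q (least_cut q X) ` X))
      ` wrap_window q (least_cut q X) ` X = X"
    using cut_X least_cycle_cut_wrap_window unwrap_wrap_window by (simp add: image_comp)
  show "\<forall>Y\<in>?B. wrap_window q (least_cut q (unwrap_window q (least_cycle_cut q Y) ` Y))
      ` unwrap_window q (least_cycle_cut q Y) ` Y = Y"
  proof
    fix Y assume Y: "Y \<in> ?B"
    then have "Y \<subseteq> Inl ` {0..<q} \<union> Inr ` {0..<r}"
      by simp
    then show "wrap_window q (least_cut q (unwrap_window q (least_cycle_cut q Y) ` Y))
        ` unwrap_window q (least_cycle_cut q Y) ` Y = Y"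
      using least_cut_unwrap_window[OF cut_Y(1,2)[OF Y] _ cut_Y(3)[OF Y]]
        unwrap_window_image(2)[OF cut_Y(1,2)[OF Y]] by simp
  qed
  show "(\<lambda>X. wrap_window q (least_cut q X) ` X) ` ?A \<subseteq> ?B"
  proof (rule image_subsetI)
    fix X assume X: "X \<in> ?A"
    then show "wrap_window q (least_cut q X) ` X \<in> ?B"
      using wrap_window_image[OF cut_X(1,2)[OF X]] by simp
  qed
  show "(\<lambda>Y. unwrap_window q (least_cycle_cut q Y) ` Y) ` ?B \<subseteq> ?A"
  proof (rule image_subsetI)
    fix Y assume Y: "Y \<in> ?B"
    then show "unwrap_window q (least_cycle_cut q Y) ` Y \<in> ?A"
      using unwrap_window_image[OF cut_Y(1,2)[OF Y]] by simp
  qed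
qed

lemma s_count_path_eq_cycle_plus_path:
  assumes "card (verts H) < q" "card (verts H) \<le> r + 1"
  shows "s_count (path_graph (q + r)) H = s_count (disj_union (cycle_graph q) (path_graph r)) H"
proof (rule s_count_eq_if_bij_betw_iso[where \<Phi> = "\<lambda>X. wrap_window q (least_cut q X) ` X"])
  show "bij_betw (\<lambda>X. wrap_window q (least_cut q X) ` X)
      {X. X \<subseteq> verts (path_graph (q + r)) \<and> card X = card (verts H)}
      {Y. Y \<subseteq> verts (disj_union (cycle_graph q) (path_graph r)) \<and> card Y = card (verts H)}"
    using bij_betw_wrap_least_cut[OF assms]
    by (simp add: verts_path_graph verts_cycle_graph verts_disj_union)
  fix X assume "X \<subseteq> verts (path_graph (q + r))" "card X = card (verts H)"
  moreover from this have "finite X"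
    by (simp add: verts_path_graph finite_subset)
  ultimately show "graph_iso (induced (path_graph (q + r)) X)
      (induced (disj_union (cycle_graph q) (path_graph r)) (wrap_window q (least_cut q X) ` X))"
    using least_cut_bound[of X q r] assms
    by (intro graph_iso_induced_wrap_window) (auto simp: verts_path_graph)
qed

theorem lemma3p1:
  fixes L :: "'a graph" and k q r :: nat
  assumes "linear_forest L"
    and "card (verts L) = k"
    and "q \<ge> k + 1"
    and "r + 1 \<ge> k"
  shows "s_count (path_graph (q + r)) L = s_count (disj_union (cycle_graph q) (path_graph r)) L"
  by (rule s_count_path_eq_cycle_plus_path) (use assms(2-4) in auto)

end
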